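(* Let $\phi_1,\dots,\phi_N$ be random features drawn from a distribution with mean $\mu_\phi$, and set $\Delta_\phi := \max_{\phi} \|\phi-\mu_\phi\|_2$, the maximum taken over the distribution's support. Let $a_1,\dots,a_N$ be real parameters with $a_i \in [\alpha,\beta]$ for all $i$, where $0<\alpha<\beta$ (any sign having been absorbed into $\phi_i$). Consider the network $\Phi = \sum_{i=1}^N a_i \phi_i$ and write $\xi := \beta-\alpha$. Suppose $\|\phi_i\|_2 \le \delta$ for every $i$. Fix $P \subseteq \{1,\dots,N\}$ with $|P| = M < N$ and define the pruned network $\Phi_M := \sum_{i \notin P} a_i \phi_i$ and the renormalized pruned network $\widehat\Phi_M := \frac{N}{N-M}\Phi_M$. Then $$\|\Phi - \widehat\Phi_M\|_2 \le 2\beta\,\Delta_\phi\, M + \xi(\beta+\alpha)\,\delta\, M/\alpha.$$ Consequently $\|\Phi - \widehat\Phi_M\|_2 = O(\Delta_\phi + \xi)$ as $\Delta_\phi + \xi \to 0$, so the error tends to $0$ as the random variables $\phi_i$ and $a_i$ concentrate.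
   Context: The network is modeled as a linear combination of features: for an input $x$, $\Phi(x) = \sum_i a_i \phi_i(x)$, where $\phi_i$ is a feature (embedding) and $a_i$ is a parameter. All norms are $2$-norms. "Pruning" sets the $M$ parameters indexed by $P$ to zero. Those indices need not be the ones with the smallest $a_i$. Renormalization then rescales the remaining network by $N/(N-M)$, where $N$ is the number of nonzero parameters before pruning. *)

theory Defs
  imports "HOL-Probability.Probability"
begin

definition measure_support :: "'a::metric_space measure \<Rightarrow> 'a set" where
  "measure_support D = {x. \<forall>e>0. emeasure D (ball x e) > 0}"

definition max_dev :: "'a::euclidean_space measure \<Rightarrow> real" where
  "max_dev D = (SUP x\<in>measure_support D. norm (x - integral\<^sup>L D (\<lambda>y. y)))"

end

theory Submission
  imports Defs
begin

text \<open>The bound is deterministic: the mean m enters only through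
  \<open>\<parallel>\<phi>\<^sub>i - m\<parallel> \<le> \<Delta>\<close>. With Q the
  kept indices, r = M/(N-M), A = \<open>\<Sum>\<^sub>P a\<^sub>i\<close> and B = \<open>\<Sum>\<^sub>Q a\<^sub>i\<close>, the error is
  \<open>\<Sum>\<^sub>P a\<^sub>i\<phi>\<^sub>i - r \<Sum>\<^sub>Q a\<^sub>i\<phi>\<^sub>i\<close>, and centring at m turns it into
  \<open>\<Sum>\<^sub>P a\<^sub>i(\<phi>\<^sub>i - m) - r \<Sum>\<^sub>Q a\<^sub>i(\<phi>\<^sub>i - m) + (A - rB) m\<close>. Both A and rB lie in
  [M\<alpha>, M\<beta>], so the centred sums contribute at most \<open>(A + rB)\<Delta>\<close>, while
  \<open>|A - rB| \<le> M(\<beta> - \<alpha>)\<close> and \<open>\<parallel>m\<parallel> \<le> \<delta> + \<Delta>\<close>; since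
  \<open>A + rB + |A - rB| = 2 max A (rB) \<le> 2M\<beta>\<close>, the error is at most
  \<open>2\<beta>\<Delta>M + (\<beta> - \<alpha>)\<delta>M\<close>, sharper than the claim by the factor \<open>(\<beta> + \<alpha>)/\<alpha>\<close>.\<close>

lemma norm_diff_mean_le_max_dev:
  assumes "bounded (measure_support D)" and "x \<in> measure_support D"
  shows "norm (x - integral\<^sup>L D (\<lambda>y. y)) \<le> max_dev D"
proof -
  define m where "m = integral\<^sup>L D (\<lambda>y. y)"
  obtain c where c: "\<And>x. x \<in> measure_support D \<Longrightarrow> norm x \<le> c"
    using assms(1) bounded_iff by blast
  have "bdd_above ((\<lambda>x. norm (x - m)) ` measure_support D)"
    by (rule bdd_aboveI2[of _ _ "c + norm m"])
       (auto intro: order_trans[OF norm_triangle_ineq4] simp: c)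
  then show ?thesis
    unfolding max_dev_def m_def[symmetric] by (rule cSUP_upper[OF assms(2)])
qed

lemma sum_between_card_bounds:
  fixes a :: "'i \<Rightarrow> real"
  assumes "\<And>i. i \<in> S \<Longrightarrow> a i \<in> {\<alpha>..\<beta>}"
  shows "real (card S) * \<alpha> \<le> sum a S" and "sum a S \<le> real (card S) * \<beta>"
  using sum_bounded_below[of S \<alpha> a] sum_bounded_above[of S a \<beta>] assms by auto

lemma norm_sum_scaleR_centered_le:
  fixes \<phi> :: "'i \<Rightarrow> 'a::real_normed_vector"
  assumes "\<And>i. i \<in> S \<Longrightarrow> 0 \<le> a i" and "\<And>i. i \<in> S \<Longrightarrow> norm (\<phi> i - m) \<le> \<Delta>"
  shows "norm (\<Sum>i\<in>S. a i *\<^sub>R (\<phi> i - m)) \<le> sum a S * \<Delta>"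
proof -
  have "norm (\<Sum>i\<in>S. a i *\<^sub>R (\<phi> i - m)) \<le> (\<Sum>i\<in>S. norm (a i *\<^sub>R (\<phi> i - m)))"
    by (rule norm_sum)
  also have "\<dots> \<le> (\<Sum>i\<in>S. a i * \<Delta>)"
    using assms by (intro sum_mono) (simp add: mult_left_mono)
  finally show ?thesis by (simp add: sum_distrib_right)
qed

lemma sum_scaleR_centered:
  fixes \<phi> :: "'i \<Rightarrow> 'a::real_vector"
  shows "(\<Sum>i\<in>S. a i *\<^sub>R \<phi> i) = (\<Sum>i\<in>S. a i *\<^sub>R (\<phi> i - m)) + sum a S *\<^sub>R m"
  by (simp add: scaleR_diff_right sum_subtractf scaleR_sum_left)

lemma renormalized_pruning_diff_eq:
  fixes f :: "'i \<Rightarrow> 'a::real_vector"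
  assumes "finite I" and "P \<subseteq> I" and "card P = M" and "card I = N" and "M < N"
  shows "sum f I - (real N / real (N - M)) *\<^sub>R sum f (I - P)
       = sum f P - (real M / real (N - M)) *\<^sub>R sum f (I - P)"
proof -
  have "real N / real (N - M) = 1 + real M / real (N - M)"
    using assms(5) by (simp add: field_simps)
  moreover have "sum f I = sum f P + sum f (I - P)"
    using assms(1,2) by (metis sum.subset_diff add.commute)
  ultimately show ?thesis by (simp add: algebra_simps)
qed

lemma renormalized_pruning_diff_centered:
  fixes \<phi> :: "'i \<Rightarrow> 'a::real_vector"
  assumes "finite I" and "P \<subseteq> I" and "card P = M" and "card I = N" and "M < N"
  defines "r \<equiv> real M / real (N - M)"
  shows "(\<Sum>i\<in>I. a i *\<^sub>R \<phi> i) - (real N / real (N - M)) *\<^sub>R (\<Sum>i\<in>I - P. a i *\<^sub>R \<phi> i)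
       = (\<Sum>i\<in>P. a i *\<^sub>R (\<phi> i - m)) - r *\<^sub>R (\<Sum>i\<in>I - P. a i *\<^sub>R (\<phi> i - m))
         + (sum a P - r * sum a (I - P)) *\<^sub>R m"
  using renormalized_pruning_diff_eq[OF assms(1-5), where f = "\<lambda>i. a i *\<^sub>R \<phi> i"]
    sum_scaleR_centered[where a = a and \<phi> = \<phi> and S = P and m = m]
    sum_scaleR_centered[where a = a and \<phi> = \<phi> and S = "I - P" and m = m]
  by (simp add: r_def algebra_simps)

lemma renormalized_weight_sums_bounds:
  fixes a :: "'i \<Rightarrow> real"
  assumes "finite I" and "P \<subseteq> I" and "card P = M" and "card I = N" and "M < N"
    and a: "\<And>i. i \<in> I \<Longrightarrow> a i \<in> {\<alpha>..\<beta>}"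
  defines "r \<equiv> real M / real (N - M)"
  shows "real M * \<alpha> \<le> sum a P" and "sum a P \<le> real M * \<beta>"
    and "real M * \<alpha> \<le> r * sum a (I - P)" and "r * sum a (I - P) \<le> real M * \<beta>"
proof -
  have a_P: "\<And>i. i \<in> P \<Longrightarrow> a i \<in> {\<alpha>..\<beta>}" and a_Q: "\<And>i. i \<in> I - P \<Longrightarrow> a i \<in> {\<alpha>..\<beta>}"
    using a assms(2) by blast+
  show "real M * \<alpha> \<le> sum a P" "sum a P \<le> real M * \<beta>"
    using sum_between_card_bounds[where S = P and a = a, OF a_P] assms(3) by simp_all
  have "card (I - P) = N - M"
    using assms(1-4) by (simp add: card_Diff_subset finite_subset)
  then have Q_bounds: "real (N - M) * \<alpha> \<le> sum a (I - P)" "sum a (I - P) \<le> real (N - M) * \<beta>"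
    using sum_between_card_bounds[where S = "I - P" and a = a, OF a_Q] by simp_all
  have "0 \<le> r" and r_card: "r * real (N - M) = real M"
    using assms(5) by (auto simp: r_def)
  then show "real M * \<alpha> \<le> r * sum a (I - P)" "r * sum a (I - P) \<le> real M * \<beta>"
    using mult_left_mono[OF Q_bounds(1), of r] mult_left_mono[OF Q_bounds(2), of r]
    by (simp_all only: mult.assoc[symmetric] r_card)
qed

lemma norm_renormalized_pruning_error_le:
  fixes \<phi> :: "'i \<Rightarrow> 'a::real_normed_vector" and a :: "'i \<Rightarrow> real"
  assumes "finite I" and "P \<subseteq> I" and "card P = M" and "card I = N" and "M < N"
    and a: "\<And>i. i \<in> I \<Longrightarrow> a i \<in> {\<alpha>..\<beta>}" and "0 \<le> \<alpha>"
    and dev: "\<And>i. i \<in> I \<Longrightarrow> norm (\<phi> i - m) \<le> \<Delta>"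
    and bound: "\<And>i. i \<in> I \<Longrightarrow> norm (\<phi> i) \<le> \<delta>"
  shows "norm ((\<Sum>i\<in>I. a i *\<^sub>R \<phi> i) - (real N / real (N - M)) *\<^sub>R (\<Sum>i\<in>I - P. a i *\<^sub>R \<phi> i))
       \<le> 2 * \<beta> * \<Delta> * real M + (\<beta> - \<alpha>) * \<delta> * real M"
proof -
  define r where "r = real M / real (N - M)"
  define A where "A = sum a P"
  define B where "B = sum a (I - P)"
  define X where "X = (\<Sum>i\<in>P. a i *\<^sub>R (\<phi> i - m))"
  define Y where "Y = (\<Sum>i\<in>I - P. a i *\<^sub>R (\<phi> i - m))"
  obtain i0 where i0: "i0 \<in> I"
    using assms(4,5) by fastforce
  have \<Delta>_nonneg: "0 \<le> \<Delta>" and \<delta>_nonneg: "0 \<le> \<delta>"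
    using dev[OF i0] bound[OF i0] norm_ge_zero order_trans by blast+
  have "norm m \<le> norm (\<phi> i0) + norm (\<phi> i0 - m)"
    using norm_triangle_ineq4[of "\<phi> i0" "\<phi> i0 - m"] by simp
  then have norm_m: "norm m \<le> \<delta> + \<Delta>"
    using bound[OF i0] dev[OF i0] by linarith
  have a_nonneg: "\<And>i. i \<in> I \<Longrightarrow> 0 \<le> a i"
    using a assms(7) atLeastAtMost_iff order_trans by metis
  have r_nonneg: "0 \<le> r"
    by (simp add: r_def)
  note weights = renormalized_weight_sums_bounds[where a = a, OF assms(1-5) a, folded r_def A_def B_def]
  have diff_le: "\<bar>A - r * B\<bar> \<le> (\<beta> - \<alpha>) * real M"
    using weights by (simp add: abs_le_iff algebra_simps)
  have sum_le: "A + r * B + \<bar>A - r * B\<bar> \<le> 2 * \<beta> * real M"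
    using weights by (simp add: abs_if algebra_simps)
  have norm_X: "norm X \<le> A * \<Delta>" and norm_Y: "norm Y \<le> B * \<Delta>"
    unfolding X_def A_def Y_def B_def using a_nonneg dev assms(2)
    by (intro norm_sum_scaleR_centered_le; auto)+
  have "norm ((\<Sum>i\<in>I. a i *\<^sub>R \<phi> i) - (real N / real (N - M)) *\<^sub>R (\<Sum>i\<in>I - P. a i *\<^sub>R \<phi> i))
      = norm (X - r *\<^sub>R Y + (A - r * B) *\<^sub>R m)"
    unfolding r_def X_def Y_def A_def B_def
    by (simp only: renormalized_pruning_diff_centered[OF assms(1-5), where m = m])
  also have "\<dots> \<le> norm X + norm (r *\<^sub>R Y) + norm ((A - r * B) *\<^sub>R m)"
    using norm_triangle_ineq[of "X - r *\<^sub>R Y" "(A - r * B) *\<^sub>R m"]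
      norm_triangle_ineq4[of X "r *\<^sub>R Y"] by linarith
  also have "\<dots> = norm X + r * norm Y + \<bar>A - r * B\<bar> * norm m"
    using r_nonneg by simp
  also have "\<dots> \<le> A * \<Delta> + r * (B * \<Delta>) + \<bar>A - r * B\<bar> * (\<delta> + \<Delta>)"
    using norm_X norm_Y norm_m r_nonneg by (intro add_mono mult_left_mono) auto
  also have "\<dots> = (A + r * B + \<bar>A - r * B\<bar>) * \<Delta> + \<bar>A - r * B\<bar> * \<delta>"
    by (simp add: algebra_simps)
  also have "\<dots> \<le> 2 * \<beta> * real M * \<Delta> + (\<beta> - \<alpha>) * real M * \<delta>"
    using sum_le diff_le \<Delta>_nonneg \<delta>_nonneg by (intro add_mono mult_right_mono) auto
  finally show ?thesis
    by (simp add: mult_ac)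
qed

theorem theorem1:
  fixes D :: "'a::euclidean_space measure"
    and phi :: "nat \<Rightarrow> 'a" and a :: "nat \<Rightarrow> real"
    and alpha beta delta :: real and N M :: nat and P :: "nat set"
  assumes "prob_space D"
    and "sets D = sets borel"
    and "integrable D (\<lambda>y. y)"
    and "bounded (measure_support D)"
    and "\<And>i. i \<in> {1..N} \<Longrightarrow> phi i \<in> measure_support D"
    and "0 < alpha" and "alpha < beta"
    and "\<And>i. i \<in> {1..N} \<Longrightarrow> a i \<in> {alpha..beta}"
    and "\<And>i. i \<in> {1..N} \<Longrightarrow> norm (phi i) \<le> delta"
    and "P \<subseteq> {1..N}" and "card P = M" and "M < N"
  shows "norm ((\<Sum>i\<in>{1..N}. a i *\<^sub>R phi i)
               - (real N / real (N - M)) *\<^sub>R (\<Sum>i\<in>{1..N} - P. a i *\<^sub>R phi i))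
         \<le> 2 * beta * max_dev D * real M
           + (beta - alpha) * (beta + alpha) * delta * real M / alpha"
proof -
  have "0 \<le> norm (phi 1)" by simp
  also have "\<dots> \<le> delta" using assms(9,12) by simp
  finally have "0 \<le> (beta - alpha) * delta * real M"
    using assms(7) by simp
  then have "(beta - alpha) * delta * real M * alpha
      \<le> (beta - alpha) * delta * real M * (beta + alpha)"
    using assms(6,7) by (intro mult_left_mono) auto
  then have "(beta - alpha) * delta * real M
      \<le> (beta - alpha) * (beta + alpha) * delta * real M / alpha"
    using assms(6) by (simp add: field_simps)
  moreover have "norm ((\<Sum>i\<in>{1..N}. a i *\<^sub>R phi i)
               - (real N / real (N - M)) *\<^sub>R (\<Sum>i\<in>{1..N} - P. a i *\<^sub>R phi i))
      \<le> 2 * beta * max_dev D * real M + (beta - alpha) * delta * real M"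
    using assms(6-12) norm_diff_mean_le_max_dev[OF assms(4,5)]
    by (intro norm_renormalized_pruning_error_le) auto
  ultimately show ?thesis by linarith
qed

end
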